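(* Let $(X,\mathcal{M})$ be a measurable space, $\Sigma$ a compact Hausdorff group with Haar probability measure $\mu_\Sigma$ acting measurably on $X$ via $T_\sigma$, and let $P,Q\in\mathcal{P}(X)$ be $\Sigma$-invariant (i.e. $P\circ T_\sigma^{-1}=P$, $Q\circ T_\sigma^{-1}=Q$ for all $\sigma\in\Sigma$). (i) If $\Gamma\subset\mathcal{M}_b(X)$ satisfies $S_\Sigma[\Gamma]\subset\Gamma$, then $D_f^\Gamma(Q\|P)=D_f^{\Gamma^{\mathrm{inv}}_\Sigma}(Q\|P)$ and $W^\Gamma(Q,P)=W^{\Gamma^{\mathrm{inv}}_\Sigma}(Q,P)$. (ii) If $\Gamma\subset\mathcal{M}_b(X)^2$ satisfies $S_\Sigma[\Gamma]\subset\Gamma$ (with $S_\Sigma$ applied componentwise) and the cost $c$ is $\Sigma$-invariant, i.e. $c(T_\sigma(x),T_\sigma(y))=c(x,y)$ for all $\sigma\in\Sigma$, $x,y\in X$, then $\mathcal{SD}^\Gamma_{c,\epsilon}(Q,P)=\mathcal{SD}^{\Gamma^{\mathrm{inv}}_\Sigma}_{c,\epsilon}(Q,P)$.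
   Context: $\mathcal{M}_b(X)$: bounded measurable functions; $\mathcal{P}(X)$: probability measures. $S_\Sigma[\gamma](x)=\int_\Sigma\gamma(T_{\sigma}(x))\mu_\Sigma(d\sigma)$. For $\Gamma$ a set of functions (or tuples of functions), $\Gamma^{\mathrm{inv}}_\Sigma=\{\gamma\in\Gamma:\gamma\circ T_\sigma=\gamma\ \forall\sigma\in\Sigma\}$ (componentwise for tuples). Let $f:[0,\infty)\to\mathbb{R}$ be convex, lower semicontinuous, $f(1)=0$, strictly convex at $1$, with Legendre transform $f^*(y)=\sup_x\{yx-f(x)\}$. The $(f,\Gamma)$-divergence is $D_f^\Gamma(Q\|P)=\sup_{\gamma\in\Gamma}\{E_Q[\gamma]-\Lambda_f^P[\gamma]\}$ with $\Lambda_f^P[\gamma]=\inf_{\nu\in\mathbb{R}}\{\nu+E_P[f^*(\gamma-\nu)]\}$. The $\Gamma$-IPM is $W^\Gamma(Q,P)=\sup_{\gamma\in\Gamma}\{E_Q[\gamma]-E_P[\gamma]\}$. For a measurable cost $c:X\times X\to[0,\infty)$, $\epsilon>0$ and $\Gamma$ a set of pairs $(\gamma_1,\gamma_2)$, $W^\Gamma_{c,\epsilon}(Q,P)=\sup_{(\gamma_1,\gamma_2)\in\Gamma}\{E_P[\gamma_1]+E_Q[\gamma_2]-\epsilon E_{P\times Q}[\exp((\gamma_1\oplus\gamma_2-c)/\epsilon)]+\epsilon\}$ where $\gamma_1\oplus\gamma_2(x,y)=\gamma_1(x)+\gamma_2(y)$, and the Sinkhorn divergence is $\mathcal{SD}^\Gamma_{c,\epsilon}(Q,P)=W^\Gamma_{c,\epsilon}(Q,P)-\tfrac12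 W^\Gamma_{c,\epsilon}(Q,Q)-\tfrac12 W^\Gamma_{c,\epsilon}(P,P)$. *)

theory Defs
  imports "HOL-Probability.Probability"
begin

definition Mb :: "'a measure \<Rightarrow> ('a \<Rightarrow> real) set" where
  "Mb M = {g. g \<in> borel_measurable M \<and> (\<exists>B. \<forall>x\<in>space M. \<bar>g x\<bar> \<le> B)}"

(* Haar probability measure on a compact Hausdorff (additively written, not necessarily
   commutative) topological group 's: a Borel probability measure invariant under
   left and right translations. *)
definition haar_prob :: "'s::topological_group_add measure \<Rightarrow> bool" where
  "haar_prob \<mu> \<longleftrightarrow> sets \<mu> = sets (borel :: 's measure) \<and> prob_space \<mu> \<and>
     (\<forall>\<sigma>. distr \<mu> \<mu> (\<lambda>\<tau>. \<sigma> + \<tau>) = \<mu> \<and> distr \<mu> \<mu> (\<lambda>\<tau>. \<tau> + \<sigma>) = \<mu>)"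

definition measurable_action :: "'s::group_add measure \<Rightarrow> 'a measure \<Rightarrow> ('s \<Rightarrow> 'a \<Rightarrow> 'a) \<Rightarrow> bool" where
  "measurable_action \<mu> M T \<longleftrightarrow>
     (\<lambda>(\<sigma>, x). T \<sigma> x) \<in> measurable (\<mu> \<Otimes>\<^sub>M M) M \<and>
     (\<forall>x\<in>space M. T 0 x = x) \<and>
     (\<forall>\<sigma> \<tau>. \<forall>x\<in>space M. T (\<sigma> + \<tau>) x = T \<sigma> (T \<tau> x))"

definition Ssym :: "'s measure \<Rightarrow> ('s \<Rightarrow> 'a \<Rightarrow> 'a) \<Rightarrow> ('a \<Rightarrow> real) \<Rightarrow> ('a \<Rightarrow> real)" where
  "Ssym \<mu> T \<gamma> = (\<lambda>x. \<integral>\<sigma>. \<gamma> (T \<sigma> x) \<partial>\<mu>)"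

definition inv_fun :: "'a measure \<Rightarrow> ('s \<Rightarrow> 'a \<Rightarrow> 'a) \<Rightarrow> ('a \<Rightarrow> real) \<Rightarrow> bool" where
  "inv_fun M T \<gamma> \<longleftrightarrow> (\<forall>\<sigma>. \<forall>x\<in>space M. \<gamma> (T \<sigma> x) = \<gamma> x)"

definition Inv :: "'a measure \<Rightarrow> ('s \<Rightarrow> 'a \<Rightarrow> 'a) \<Rightarrow> ('a \<Rightarrow> real) set \<Rightarrow> ('a \<Rightarrow> real) set" where
  "Inv M T \<Gamma> = {\<gamma>\<in>\<Gamma>. inv_fun M T \<gamma>}"

definition Inv2 :: "'a measure \<Rightarrow> ('s \<Rightarrow> 'a \<Rightarrow> 'a) \<Rightarrow> (('a \<Rightarrow> real) \<times> ('a \<Rightarrow> real)) set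
    \<Rightarrow> (('a \<Rightarrow> real) \<times> ('a \<Rightarrow> real)) set" where
  "Inv2 M T \<Gamma> = {g\<in>\<Gamma>. inv_fun M T (fst g) \<and> inv_fun M T (snd g)}"

definition admissible_f :: "(real \<Rightarrow> real) \<Rightarrow> bool" where
  "admissible_f f \<longleftrightarrow>
     convex_on {0..} f \<and>
     (\<forall>x\<ge>0. ereal (f x) \<le> Liminf (at x within {0..}) (\<lambda>y. ereal (f y))) \<and>
     f 1 = 0 \<and>
     (\<forall>x y t. x \<ge> 0 \<longrightarrow> y \<ge> 0 \<longrightarrow> x \<noteq> y \<longrightarrow> 0 < t \<longrightarrow> t < 1 \<longrightarrow> t * x + (1 - t) * y = 1
        \<longrightarrow> f 1 < t * f x + (1 - t) * f y)"

definition fstar :: "(real \<Rightarrow> real) \<Rightarrow> real \<Rightarrow> ereal" where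
  "fstar f y = (SUP x\<in>{0..}. ereal (y * x - f x))"

definition eexp :: "'a measure \<Rightarrow> ('a \<Rightarrow> ereal) \<Rightarrow> ereal" where
  "eexp P g = enn2ereal (\<integral>\<^sup>+ x. e2ennreal (max 0 (g x)) \<partial>P)
              - enn2ereal (\<integral>\<^sup>+ x. e2ennreal (max 0 (- g x)) \<partial>P)"

definition Lambda_f :: "(real \<Rightarrow> real) \<Rightarrow> 'a measure \<Rightarrow> ('a \<Rightarrow> real) \<Rightarrow> ereal" where
  "Lambda_f f P \<gamma> = (INF \<nu>::real. ereal \<nu> + eexp P (\<lambda>x. fstar f (\<gamma> x - \<nu>)))"

definition fGamma_div :: "(real \<Rightarrow> real) \<Rightarrow> ('a \<Rightarrow> real) set \<Rightarrow> 'a measure \<Rightarrow> 'a measure \<Rightarrow> ereal" where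
  "fGamma_div f \<Gamma> Q P = (SUP \<gamma>\<in>\<Gamma>. ereal (\<integral>x. \<gamma> x \<partial>Q) - Lambda_f f P \<gamma>)"

definition IPM :: "('a \<Rightarrow> real) set \<Rightarrow> 'a measure \<Rightarrow> 'a measure \<Rightarrow> ereal" where
  "IPM \<Gamma> Q P = (SUP \<gamma>\<in>\<Gamma>. ereal ((\<integral>x. \<gamma> x \<partial>Q) - (\<integral>x. \<gamma> x \<partial>P)))"

definition W_ce :: "('a \<Rightarrow> 'a \<Rightarrow> real) \<Rightarrow> real \<Rightarrow> (('a \<Rightarrow> real) \<times> ('a \<Rightarrow> real)) set
    \<Rightarrow> 'a measure \<Rightarrow> 'a measure \<Rightarrow> ereal" where
  "W_ce c \<epsilon> \<Gamma> Q P = (SUP g\<in>\<Gamma>. ereal ((\<integral>x. fst g x \<partial>P) + (\<integral>y. snd g y \<partial>Q)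
      - \<epsilon> * (\<integral>z. exp ((fst g (fst z) + snd g (snd z) - c (fst z) (snd z)) / \<epsilon>) \<partial>(P \<Otimes>\<^sub>M Q))
      + \<epsilon>))"

definition sinkhorn :: "('a \<Rightarrow> 'a \<Rightarrow> real) \<Rightarrow> real \<Rightarrow> (('a \<Rightarrow> real) \<times> ('a \<Rightarrow> real)) set
    \<Rightarrow> 'a measure \<Rightarrow> 'a measure \<Rightarrow> ereal" where
  "sinkhorn c \<epsilon> \<Gamma> Q P = W_ce c \<epsilon> \<Gamma> Q P - ereal (1/2) * W_ce c \<epsilon> \<Gamma> Q Q - ereal (1/2) * W_ce c \<epsilon> \<Gamma> P P"

end

theory Submission
  imports Defs
begin

text \<open>Averaging over the group, \<open>S[\<gamma>](x) = \<integral> \<gamma>(T\<^sub>\<sigma> x) d\<mu>(\<sigma>)\<close>, turns every test function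
  into an invariant one, by right invariance of the Haar measure. For invariant \<open>P\<close> and \<open>Q\<close> it
  preserves \<open>E\<^sub>P[\<gamma>]\<close> and \<open>E\<^sub>Q[\<gamma>]\<close> (Fubini), and by Jensen's inequality it does not increase
  \<open>\<Lambda>\<^sub>f\<^sup>P[\<gamma>]\<close>, because \<open>f\<^sup>*\<close> is a supremum of affine functions, nor the entropic term
  \<open>E\<^sub>P\<^sub>\<times>\<^sub>Q[exp((\<gamma>\<^sub>1 \<oplus> \<gamma>\<^sub>2 - c)/\<epsilon>)]\<close>, because \<open>exp\<close> is convex and \<open>c\<close> is constant on the
  orbits of the diagonal action. So every objective is at least as large at \<open>S[\<gamma>] \<in> \<Gamma>\<^sup>i\<^sup>n\<^sup>v\<close> as
  at \<open>\<gamma>\<close>, and the suprema over \<open>\<Gamma>\<close> and over \<open>\<Gamma>\<^sup>i\<^sup>n\<^sup>v\<close> agree.\<close>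

lemma SUP_eq_SUP_subset_improving:
  fixes F :: "'b \<Rightarrow> 'c::complete_lattice"
  assumes "B \<subseteq> A" and "\<And>x. x \<in> A \<Longrightarrow> S x \<in> B" and "\<And>x. x \<in> A \<Longrightarrow> F x \<le> F (S x)"
  shows "(SUP x\<in>A. F x) = (SUP x\<in>B. F x)"
proof (rule antisym)
  show "(SUP x\<in>A. F x) \<le> (SUP x\<in>B. F x)"
    using assms(2,3) by (intro SUP_least) (meson SUP_upper order_trans)
  show "(SUP x\<in>B. F x) \<le> (SUP x\<in>A. F x)"
    using assms(1) by (rule SUP_subset_mono) simp
qed

lemma MbE:
  assumes "\<gamma> \<in> Mb M"
  obtains B where "\<gamma> \<in> borel_measurable M" and "\<forall>x\<in>space M. \<bar>\<gamma> x\<bar> \<le> B"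
  using assms unfolding Mb_def by auto

lemma MbI:
  "\<gamma> \<in> borel_measurable M \<Longrightarrow> (\<And>x. x \<in> space M \<Longrightarrow> \<bar>\<gamma> x\<bar> \<le> B) \<Longrightarrow> \<gamma> \<in> Mb M"
  by (auto simp: Mb_def)

lemma (in finite_measure) integrable_Mb:
  assumes sets: "sets M = sets N" and "\<gamma> \<in> Mb N"
  shows "integrable M \<gamma>"
proof -
  obtain B where "\<gamma> \<in> borel_measurable N" and B: "\<forall>x\<in>space N. \<bar>\<gamma> x\<bar> \<le> B"
    using assms(2) by (rule MbE)
  then have "\<gamma> \<in> borel_measurable M"
    using measurable_cong_sets[OF sets refl, of "borel :: real measure"] by simp
  moreover have "space M = space N"
    using sets by (rule sets_eq_imp_space_eq)
  ultimately show ?thesis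
    using B by (intro integrable_const_bound[where B = B]) auto
qed

lemma mono_fstar: "mono (fstar f)"
  unfolding mono_def fstar_def
proof (intro allI impI SUP_mono)
  fix x y t :: real
  assume "x \<le> y" and "t \<in> {0..}"
  then show "\<exists>s\<in>{0..}. ereal (x * t - f t) \<le> ereal (y * s - f s)"
    by (intro bexI[of _ t]) (auto intro: mult_right_mono)
qed

lemma fstar_ge_minus_f0: "ereal (- f 0) \<le> fstar f y"
  unfolding fstar_def by (rule SUP_upper2[where i = 0]) auto

lemma borel_measurable_fstar [measurable]: "fstar f \<in> borel_measurable borel"
proof (rule borel_measurableI_greater)
  fix a
  have "is_interval {y. a < fstar f y}"
    unfolding is_interval_1 using mono_fstar[of f]
    by (auto simp: mono_def intro: less_le_trans)
  then show "{y \<in> space borel. a < fstar f y} \<in> sets borel"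
    using real_interval_borel_measurable by simp
qed

text \<open>Jensen's inequality for the supremum of affine functions \<open>fstar f\<close>, in the shifted
  nonnegative form in which \<open>eexp_eq_nn_integral_diff\<close> expresses \<open>eexp\<close>.\<close>
lemma (in prob_space) fstar_expectation_le:
  assumes u: "integrable M u"
  shows "fstar f (expectation u) + ereal C \<le> enn2ereal (\<integral>\<^sup>+x. e2ennreal (fstar f (u x) + ereal C) \<partial>M)"
proof -
  define I where "I = enn2ereal (\<integral>\<^sup>+x. e2ennreal (fstar f (u x) + ereal C) \<partial>M)"
  have "ereal (expectation u * t - f t) \<le> I - ereal C" if t: "t \<ge> 0" for t
  proof -
    define w where "w = (\<lambda>x. u x * t - f t + C)"
    have w: "integrable M w" "integrable M (\<lambda>x. max 0 (w x))"
      using u by (simp_all add: w_def)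
    have w_le: "ennreal (max 0 (w x)) \<le> e2ennreal (fstar f (u x) + ereal C)" for x
    proof -
      have "ereal (u x * t - f t) \<le> fstar f (u x)"
        unfolding fstar_def using t by (intro SUP_upper) auto
      then have "ereal (u x * t - f t) + ereal C \<le> fstar f (u x) + ereal C"
        by (rule add_right_mono)
      then have "ereal (w x) \<le> fstar f (u x) + ereal C"
        by (simp add: w_def)
      then show ?thesis
        using e2ennreal_mono by (fastforce simp: ennreal_max_0)
    qed
    have "ereal (expectation w) \<le> ereal (expectation (\<lambda>x. max 0 (w x)))"
      using w by (simp add: integral_mono)
    also have "\<dots> = enn2ereal (\<integral>\<^sup>+x. ennreal (max 0 (w x)) \<partial>M)"
      using nn_integral_eq_integral[OF w(2)] by simp
    also have "\<dots> \<le> I"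
      unfolding I_def less_eq_ennreal.rep_eq[symmetric] by (intro nn_integral_mono w_le)
    finally have "ereal (expectation u * t - f t) + ereal C \<le> I"
      using u by (simp add: w_def prob_space)
    then show ?thesis
      by (simp add: ereal_le_minus_iff)
  qed
  then have "fstar f (expectation u) \<le> I - ereal C"
    unfolding fstar_def by (auto intro: SUP_least)
  then show ?thesis
    by (simp add: I_def ereal_le_minus_iff)
qed

lemma ereal_diff_eq_diff_if_add_eq:
  "(a::ereal) + ereal c = b + ereal d \<Longrightarrow> a - ereal d = b - ereal c"
  by (cases a; cases b) (simp_all add: algebra_simps)

lemma e2ennreal_max_add_eq:
  assumes "- ereal C \<le> a" and "0 \<le> C"
  shows "e2ennreal (max 0 a) + ennreal C = e2ennreal (a + ereal C) + e2ennreal (max 0 (- a))"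
proof (cases a)
  case (real r)
  then have "0 \<le> r + C"
    using assms(1) by simp
  then show ?thesis
    using real assms(2)
    by (cases "0 \<le> r") (simp_all add: max_def ennreal_plus[symmetric] del: ennreal_plus)
qed (use assms in simp_all)

lemma eexp_eq_nn_integral_diff:
  assumes P: "prob_space P" and g: "g \<in> borel_measurable P"
    and lb: "\<forall>x\<in>space P. - ereal C \<le> g x" and C: "0 \<le> C"
  shows "eexp P g = enn2ereal (\<integral>\<^sup>+x. e2ennreal (g x + ereal C) \<partial>P) - ereal C"
proof -
  interpret prob_space P by (rule P)
  define pos neg where "pos = (\<integral>\<^sup>+x. e2ennreal (max 0 (g x)) \<partial>P)"
    and "neg = (\<integral>\<^sup>+x. e2ennreal (max 0 (- g x)) \<partial>P)"
  define shifted where "shifted = (\<integral>\<^sup>+x. e2ennreal (g x + ereal C) \<partial>P)"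
  have "pos + ennreal C = (\<integral>\<^sup>+x. e2ennreal (max 0 (g x)) + ennreal C \<partial>P)"
    using g by (simp add: pos_def nn_integral_add emeasure_space_1)
  also have "\<dots> = (\<integral>\<^sup>+x. e2ennreal (g x + ereal C) + e2ennreal (max 0 (- g x)) \<partial>P)"
    using lb C by (intro nn_integral_cong e2ennreal_max_add_eq) auto
  also have "\<dots> = shifted + neg"
    using g by (simp add: shifted_def neg_def nn_integral_add)
  finally have sum: "pos + ennreal C = shifted + neg" .
  have "neg \<le> (\<integral>\<^sup>+x. ennreal C \<partial>P)"
    unfolding neg_def
  proof (intro nn_integral_mono)
    fix x assume "x \<in> space P"
    then have "max 0 (- g x) \<le> ereal C"
      using lb C by (cases "g x") auto
    then show "e2ennreal (max 0 (- g x)) \<le> ennreal C"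
      using e2ennreal_mono by fastforce
  qed
  then have "neg \<le> ennreal C"
    by (simp add: emeasure_space_1)
  then obtain n where n: "neg = ennreal n" "0 \<le> n"
    by (metis ennreal_cases ennreal_neq_top neq_top_trans)
  have "enn2ereal pos + ereal C = enn2ereal shifted + ereal n"
    using arg_cong[OF sum, of enn2ereal] C n by (simp add: plus_ennreal.rep_eq)
  then have "enn2ereal pos - ereal n = enn2ereal shifted - ereal C"
    by (rule ereal_diff_eq_diff_if_add_eq)
  then show ?thesis
    unfolding eexp_def using n by (simp add: pos_def neg_def shifted_def)
qed

definition gibbs_density ::
    "('a \<Rightarrow> 'b \<Rightarrow> real) \<Rightarrow> real \<Rightarrow> ('a \<Rightarrow> real) \<Rightarrow> ('b \<Rightarrow> real) \<Rightarrow> 'a \<times> 'b \<Rightarrow> real" where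
  "gibbs_density c \<epsilon> \<gamma>\<^sub>1 \<gamma>\<^sub>2 = (\<lambda>z. exp ((\<gamma>\<^sub>1 (fst z) + \<gamma>\<^sub>2 (snd z) - c (fst z) (snd z)) / \<epsilon>))"

lemma gibbs_density_Mb:
  assumes "\<gamma>\<^sub>1 \<in> Mb M" and "\<gamma>\<^sub>2 \<in> Mb N" and c: "case_prod c \<in> borel_measurable (M \<Otimes>\<^sub>M N)"
    and c_nonneg: "\<forall>x\<in>space M. \<forall>y\<in>space N. c x y \<ge> 0" and "\<epsilon> > 0"
  shows "gibbs_density c \<epsilon> \<gamma>\<^sub>1 \<gamma>\<^sub>2 \<in> Mb (M \<Otimes>\<^sub>M N)"
proof -
  obtain B\<^sub>1 where [measurable]: "\<gamma>\<^sub>1 \<in> borel_measurable M" and B\<^sub>1: "\<forall>x\<in>space M. \<bar>\<gamma>\<^sub>1 x\<bar> \<le> B\<^sub>1"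
    using assms(1) by (rule MbE)
  obtain B\<^sub>2 where [measurable]: "\<gamma>\<^sub>2 \<in> borel_measurable N" and B\<^sub>2: "\<forall>y\<in>space N. \<bar>\<gamma>\<^sub>2 y\<bar> \<le> B\<^sub>2"
    using assms(2) by (rule MbE)
  have [measurable]: "(\<lambda>z. c (fst z) (snd z)) \<in> borel_measurable (M \<Otimes>\<^sub>M N)"
    using c by (simp add: case_prod_beta')
  have "\<bar>gibbs_density c \<epsilon> \<gamma>\<^sub>1 \<gamma>\<^sub>2 (x, y)\<bar> \<le> exp ((B\<^sub>1 + B\<^sub>2) / \<epsilon>)"
    if "x \<in> space M" "y \<in> space N" for x y
  proof -
    have "\<gamma>\<^sub>1 x + \<gamma>\<^sub>2 y - c x y \<le> B\<^sub>1 + B\<^sub>2"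
      using that B\<^sub>1 B\<^sub>2 c_nonneg by fastforce
    then show ?thesis
      using \<open>\<epsilon> > 0\<close> by (simp add: gibbs_density_def divide_right_mono)
  qed
  then show ?thesis
    by (intro MbI[where B = "exp ((B\<^sub>1 + B\<^sub>2) / \<epsilon>)"]) (auto simp: gibbs_density_def space_pair_measure)
qed

definition invariant_prob :: "'a measure \<Rightarrow> ('s \<Rightarrow> 'a \<Rightarrow> 'a) \<Rightarrow> 'a measure \<Rightarrow> bool" where
  "invariant_prob M T R \<longleftrightarrow> prob_space R \<and> sets R = sets M \<and> (\<forall>\<sigma>. distr R M (T \<sigma>) = R)"

locale haar_action =
  fixes M :: "'a measure" and \<mu> :: "'s::topological_group_add measure" and T :: "'s \<Rightarrow> 'a \<Rightarrow> 'a"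
  assumes haar: "haar_prob \<mu>" and action: "measurable_action \<mu> M T"
begin

sublocale mu: prob_space \<mu>
  using haar by (simp add: haar_prob_def)

lemma sets_mu: "sets \<mu> = sets borel"
  using haar by (simp add: haar_prob_def)

lemma space_mu: "space \<mu> = UNIV"
  using sets_eq_imp_space_eq[OF sets_mu] by simp

lemma measurable_action_pair: "(\<lambda>(\<sigma>, x). T \<sigma> x) \<in> measurable (\<mu> \<Otimes>\<^sub>M M) M"
  using action by (simp add: measurable_action_def)

lemma T_add: "x \<in> space M \<Longrightarrow> T (\<sigma> + \<tau>) x = T \<sigma> (T \<tau> x)"
  using action by (simp add: measurable_action_def)

lemma measurable_T: "T \<sigma> \<in> measurable M M"
  using measurable_Pair2[OF measurable_action_pair, of \<sigma>] by (simp add: space_mu)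

lemma T_in_space: "x \<in> space M \<Longrightarrow> T \<sigma> x \<in> space M"
  using measurable_T by (rule measurable_space)

lemma measurable_orbit_fun:
  "\<gamma> \<in> borel_measurable M \<Longrightarrow> (\<lambda>(\<sigma>, x). \<gamma> (T \<sigma> x)) \<in> borel_measurable (\<mu> \<Otimes>\<^sub>M M)"
  using measurable_comp[OF measurable_action_pair] by (simp add: comp_def case_prod_beta')

lemma orbit_Mb:
  assumes "\<gamma> \<in> Mb M" and x: "x \<in> space M"
  shows "(\<lambda>\<sigma>. \<gamma> (T \<sigma> x)) \<in> Mb \<mu>"
proof -
  obtain B where "\<gamma> \<in> borel_measurable M" and B: "\<forall>x\<in>space M. \<bar>\<gamma> x\<bar> \<le> B"
    using assms(1) by (rule MbE)
  then show ?thesis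
    using measurable_Pair1[OF measurable_orbit_fun] x T_in_space[OF x]
    by (intro MbI[where B = B]) auto
qed

lemma orbit_fun_Mb:
  assumes "\<gamma> \<in> Mb M"
  shows "(\<lambda>(\<sigma>, x). \<gamma> (T \<sigma> x)) \<in> Mb (\<mu> \<Otimes>\<^sub>M M)"
proof -
  obtain B where "\<gamma> \<in> borel_measurable M" and B: "\<forall>x\<in>space M. \<bar>\<gamma> x\<bar> \<le> B"
    using assms by (rule MbE)
  then show ?thesis
    using T_in_space by (intro MbI[where B = B] measurable_orbit_fun) (auto simp: space_pair_measure)
qed

lemma Ssym_invariant:
  assumes "\<gamma> \<in> borel_measurable M"
  shows "inv_fun M T (Ssym \<mu> T \<gamma>)"
  unfolding inv_fun_def
proof (intro allI ballI)
  fix \<tau> x assume x: "x \<in> space M"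
  have shift: "(\<lambda>\<sigma>. \<sigma> + \<tau>) \<in> measurable \<mu> \<mu>"
    using measurable_cong_sets[OF sets_mu sets_mu]
    by (simp add: borel_measurable_continuous_onI continuous_intros)
  have "Ssym \<mu> T \<gamma> (T \<tau> x) = (\<integral>\<sigma>. \<gamma> (T (\<sigma> + \<tau>) x) \<partial>\<mu>)"
    unfolding Ssym_def using x by (simp add: T_add)
  also have "\<dots> = (\<integral>\<sigma>. \<gamma> (T \<sigma> x) \<partial>distr \<mu> \<mu> (\<lambda>\<sigma>. \<sigma> + \<tau>))"
    using measurable_Pair1[OF measurable_orbit_fun[OF assms]] x
    by (intro integral_distr[OF shift, symmetric]) auto
  also have "\<dots> = Ssym \<mu> T \<gamma> x"
    using haar by (simp add: haar_prob_def Ssym_def)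
  finally show "Ssym \<mu> T \<gamma> (T \<tau> x) = Ssym \<mu> T \<gamma> x" .
qed

lemma Ssym_Mb:
  assumes "\<gamma> \<in> Mb M"
  shows "Ssym \<mu> T \<gamma> \<in> Mb M"
proof -
  obtain B where "\<gamma> \<in> borel_measurable M" and B: "\<forall>x\<in>space M. \<bar>\<gamma> x\<bar> \<le> B"
    using assms by (rule MbE)
  have "(\<lambda>(x, \<sigma>). \<gamma> (T \<sigma> x)) \<in> borel_measurable (M \<Otimes>\<^sub>M \<mu>)"
    using measurable_orbit_fun[OF \<open>\<gamma> \<in> borel_measurable M\<close>]
    by (subst measurable_pair_swap_iff) simp
  then have "Ssym \<mu> T \<gamma> \<in> borel_measurable M"
    unfolding Ssym_def by (rule mu.borel_measurable_lebesgue_integral[of "\<lambda>x \<sigma>. \<gamma> (T \<sigma> x)"])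
  moreover have "\<bar>Ssym \<mu> T \<gamma> x\<bar> \<le> B" if x: "x \<in> space M" for x
  proof -
    have "integrable \<mu> (\<lambda>\<sigma>. \<gamma> (T \<sigma> x))"
      using orbit_Mb[OF assms x] by (intro mu.integrable_Mb[OF refl])
    moreover have "\<bar>\<gamma> (T \<sigma> x)\<bar> \<le> B" for \<sigma>
      using B T_in_space[OF x] by blast
    ultimately have "- B \<le> (\<integral>\<sigma>. \<gamma> (T \<sigma> x) \<partial>\<mu>)" "(\<integral>\<sigma>. \<gamma> (T \<sigma> x) \<partial>\<mu>) \<le> B"
      by (auto intro!: mu.integral_le_const mu.integral_ge_const simp: abs_le_iff minus_le_iff)
    then show ?thesis
      by (simp add: Ssym_def)
  qed
  ultimately show ?thesis
    by (intro MbI)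
qed

lemma invariant_prob_measurable_T:
  assumes "invariant_prob M T R"
  shows "T \<sigma> \<in> measurable R M"
proof -
  have "sets R = sets M"
    using assms by (simp add: invariant_prob_def)
  then show ?thesis
    using measurable_T measurable_cong_sets[of R M M M] by blast
qed

lemma integral_invariant_prob_comp:
  fixes \<gamma> :: "'a \<Rightarrow> real"
  assumes R: "invariant_prob M T R" and "\<gamma> \<in> borel_measurable M"
  shows "(\<integral>x. \<gamma> (T \<sigma> x) \<partial>R) = (\<integral>x. \<gamma> x \<partial>R)"
  using integral_distr[OF invariant_prob_measurable_T[OF R], of \<gamma>] assms R
  by (simp add: invariant_prob_def)

lemma nn_integral_invariant_prob_comp:
  assumes R: "invariant_prob M T R" and "h \<in> borel_measurable M"
  shows "(\<integral>\<^sup>+x. h (T \<sigma> x) \<partial>R) = (\<integral>\<^sup>+x. h x \<partial>R)"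
  using nn_integral_distr[OF invariant_prob_measurable_T[OF R], of h] assms R
  by (simp add: invariant_prob_def)

lemma integral_Ssym:
  assumes R: "invariant_prob M T R" and "\<gamma> \<in> Mb M"
  shows "(\<integral>x. Ssym \<mu> T \<gamma> x \<partial>R) = (\<integral>x. \<gamma> x \<partial>R)"
proof -
  have R_prob: "prob_space R" and R_sets: "sets R = sets M"
    using R by (simp_all add: invariant_prob_def)
  interpret pair_prob_space \<mu> R
    using R_prob by (simp add: pair_prob_space_def pair_sigma_finite_def prob_space_imp_sigma_finite mu.prob_space_axioms)
  have "integrable (\<mu> \<Otimes>\<^sub>M R) (\<lambda>(\<sigma>, x). \<gamma> (T \<sigma> x))"
    using R_sets orbit_fun_Mb[OF assms(2)]
    by (intro P.integrable_Mb[of "\<mu> \<Otimes>\<^sub>M M"] sets_pair_measure_cong) auto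
  then have "(\<integral>x. Ssym \<mu> T \<gamma> x \<partial>R) = (\<integral>\<sigma>. (\<integral>x. \<gamma> (T \<sigma> x) \<partial>R) \<partial>\<mu>)"
    unfolding Ssym_def by (rule Fubini_integral)
  also have "\<dots> = (\<integral>x. \<gamma> x \<partial>R)"
    using assms by (simp add: integral_invariant_prob_comp Mb_def mu.prob_space)
  finally show ?thesis .
qed

lemma nn_integral_orbit_average:
  assumes R: "invariant_prob M T R" and h: "h \<in> borel_measurable M"
  shows "(\<integral>\<^sup>+x. (\<integral>\<^sup>+\<sigma>. h (T \<sigma> x) \<partial>\<mu>) \<partial>R) = (\<integral>\<^sup>+x. h x \<partial>R)"
proof -
  have R_prob: "prob_space R" and R_sets: "sets R = sets M"
    using R by (simp_all add: invariant_prob_def)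
  interpret pair_prob_space \<mu> R
    using R_prob by (simp add: pair_prob_space_def pair_sigma_finite_def prob_space_imp_sigma_finite mu.prob_space_axioms)
  have "(\<lambda>(\<sigma>, x). h (T \<sigma> x)) \<in> borel_measurable (\<mu> \<Otimes>\<^sub>M M)"
    using measurable_comp[OF measurable_action_pair h] by (simp add: comp_def case_prod_beta')
  then have "(\<lambda>(\<sigma>, x). h (T \<sigma> x)) \<in> borel_measurable (\<mu> \<Otimes>\<^sub>M R)"
    using measurable_cong_sets[OF sets_pair_measure_cong[OF refl R_sets] refl] by blast
  then have "(\<integral>\<^sup>+x. (\<integral>\<^sup>+\<sigma>. h (T \<sigma> x) \<partial>\<mu>) \<partial>R) = (\<integral>\<^sup>+\<sigma>. (\<integral>\<^sup>+x. h (T \<sigma> x) \<partial>R) \<partial>\<mu>)"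
    by (rule Fubini')
  also have "\<dots> = (\<integral>\<^sup>+x. h x \<partial>R)"
    using assms by (simp add: nn_integral_invariant_prob_comp mu.emeasure_space_1)
  finally show ?thesis .
qed

lemma eexp_fstar_Ssym_le:
  assumes R: "invariant_prob M T R" and \<gamma>: "\<gamma> \<in> Mb M"
  shows "eexp R (\<lambda>x. fstar f (Ssym \<mu> T \<gamma> x - \<nu>)) \<le> eexp R (\<lambda>x. fstar f (\<gamma> x - \<nu>))"
proof -
  define C where "C = \<bar>f 0\<bar>"
  define h where "h y = e2ennreal (fstar f (y - \<nu>) + ereal C)" for y
  have R_prob: "prob_space R" and R_sets: "sets R = sets M"
    using R by (simp_all add: invariant_prob_def)
  have [measurable]: "\<gamma> \<in> borel_measurable M"
    using \<gamma> by (simp add: Mb_def)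
  have C: "0 \<le> C" "\<And>y. - ereal C \<le> fstar f y"
    unfolding C_def using order_trans[OF _ fstar_ge_minus_f0[of f]] by auto
  have eexp_eq: "eexp R (\<lambda>x. fstar f (g x - \<nu>)) = enn2ereal (\<integral>\<^sup>+x. h (g x) \<partial>R) - ereal C"
    if "g \<in> borel_measurable M" for g
    unfolding h_def using that C R_prob
    by (intro eexp_eq_nn_integral_diff) (auto simp: measurable_cong_sets[OF R_sets refl])
  have "(\<integral>\<^sup>+x. h (Ssym \<mu> T \<gamma> x) \<partial>R) \<le> (\<integral>\<^sup>+x. (\<integral>\<^sup>+\<sigma>. h (\<gamma> (T \<sigma> x)) \<partial>\<mu>) \<partial>R)"
  proof (intro nn_integral_mono)
    fix x assume "x \<in> space R"
    then have x: "x \<in> space M"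
      using sets_eq_imp_space_eq[OF R_sets] by simp
    have "integrable \<mu> (\<lambda>\<sigma>. \<gamma> (T \<sigma> x) - \<nu>)"
      using orbit_Mb[OF \<gamma> x] by (simp add: mu.integrable_Mb)
    from mu.fstar_expectation_le[OF this, of f C]
    have "fstar f (Ssym \<mu> T \<gamma> x - \<nu>) + ereal C \<le> enn2ereal (\<integral>\<^sup>+\<sigma>. h (\<gamma> (T \<sigma> x)) \<partial>\<mu>)"
      using orbit_Mb[OF \<gamma> x] by (simp add: h_def Ssym_def mu.prob_space mu.integrable_Mb)
    then show "h (Ssym \<mu> T \<gamma> x) \<le> (\<integral>\<^sup>+\<sigma>. h (\<gamma> (T \<sigma> x)) \<partial>\<mu>)"
      unfolding h_def by (metis e2ennreal_enn2ereal e2ennreal_mono)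
  qed
  also have "\<dots> = (\<integral>\<^sup>+x. h (\<gamma> x) \<partial>R)"
    unfolding h_def by (intro nn_integral_orbit_average[OF R]) measurable
  finally show ?thesis
    using \<gamma> Ssym_Mb[OF \<gamma>]
    by (simp add: eexp_eq Mb_def ereal_minus_mono less_eq_ennreal.rep_eq)
qed

lemma Lambda_f_Ssym_le:
  assumes "invariant_prob M T R" and "\<gamma> \<in> Mb M"
  shows "Lambda_f f R (Ssym \<mu> T \<gamma>) \<le> Lambda_f f R \<gamma>"
  unfolding Lambda_f_def
  using add_left_mono[OF eexp_fstar_Ssym_le[OF assms]] by (intro INF_mono) blast

lemma Ssym_in_Inv:
  assumes "\<Gamma> \<subseteq> Mb M" and "Ssym \<mu> T ` \<Gamma> \<subseteq> \<Gamma>" and "\<gamma> \<in> \<Gamma>"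
  shows "Ssym \<mu> T \<gamma> \<in> Inv M T \<Gamma>"
  using assms Ssym_invariant by (auto simp: Inv_def Mb_def)

lemma fGamma_div_Inv:
  assumes P: "invariant_prob M T P" and Q: "invariant_prob M T Q"
    and \<Gamma>: "\<Gamma> \<subseteq> Mb M" "Ssym \<mu> T ` \<Gamma> \<subseteq> \<Gamma>"
  shows "fGamma_div f \<Gamma> Q P = fGamma_div f (Inv M T \<Gamma>) Q P"
  unfolding fGamma_div_def
proof (rule SUP_eq_SUP_subset_improving)
  show "Inv M T \<Gamma> \<subseteq> \<Gamma>"
    unfolding Inv_def by blast
  show "Ssym \<mu> T \<gamma> \<in> Inv M T \<Gamma>" if "\<gamma> \<in> \<Gamma>" for \<gamma>
    using \<Gamma> that by (rule Ssym_in_Inv)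
  fix \<gamma> assume "\<gamma> \<in> \<Gamma>"
  then have "\<gamma> \<in> Mb M"
    using \<Gamma> by blast
  then show "ereal (\<integral>x. \<gamma> x \<partial>Q) - Lambda_f f P \<gamma>
      \<le> ereal (\<integral>x. Ssym \<mu> T \<gamma> x \<partial>Q) - Lambda_f f P (Ssym \<mu> T \<gamma>)"
    using P Q by (simp add: integral_Ssym Lambda_f_Ssym_le ereal_minus_mono)
qed

lemma IPM_Inv:
  assumes P: "invariant_prob M T P" and Q: "invariant_prob M T Q"
    and \<Gamma>: "\<Gamma> \<subseteq> Mb M" "Ssym \<mu> T ` \<Gamma> \<subseteq> \<Gamma>"
  shows "IPM \<Gamma> Q P = IPM (Inv M T \<Gamma>) Q P"
  unfolding IPM_def
proof (rule SUP_eq_SUP_subset_improving)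
  show "Inv M T \<Gamma> \<subseteq> \<Gamma>"
    unfolding Inv_def by blast
  show "Ssym \<mu> T \<gamma> \<in> Inv M T \<Gamma>" if "\<gamma> \<in> \<Gamma>" for \<gamma>
    using \<Gamma> that by (rule Ssym_in_Inv)
  fix \<gamma> assume "\<gamma> \<in> \<Gamma>"
  then have "\<gamma> \<in> Mb M"
    using \<Gamma> by blast
  then show "ereal ((\<integral>x. \<gamma> x \<partial>Q) - (\<integral>x. \<gamma> x \<partial>P))
      \<le> ereal ((\<integral>x. Ssym \<mu> T \<gamma> x \<partial>Q) - (\<integral>x. Ssym \<mu> T \<gamma> x \<partial>P))"
    using P Q by (simp add: integral_Ssym)
qed

lemma haar_action_diagonal: "haar_action (M \<Otimes>\<^sub>M M) \<mu> (\<lambda>\<sigma>. map_prod (T \<sigma>) (T \<sigma>))"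
proof -
  have T_comp: "(\<lambda>p. T (fst p) (g p)) \<in> measurable (\<mu> \<Otimes>\<^sub>M (M \<Otimes>\<^sub>M M)) M"
    if "g \<in> measurable (\<mu> \<Otimes>\<^sub>M (M \<Otimes>\<^sub>M M)) M" for g
    using measurable_comp[OF _ measurable_action_pair, of "\<lambda>p. (fst p, g p)"] that
    by (simp add: comp_def)
  have "(\<lambda>(\<sigma>, z). map_prod (T \<sigma>) (T \<sigma>) z) \<in> measurable (\<mu> \<Otimes>\<^sub>M (M \<Otimes>\<^sub>M M)) (M \<Otimes>\<^sub>M M)"
    using T_comp[of "\<lambda>p. fst (snd p)"] T_comp[of "\<lambda>p. snd (snd p)"]
    by (simp add: map_prod_def case_prod_beta' split_beta')
  moreover have "x \<in> space M \<Longrightarrow> T 0 x = x" for x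
    using action by (simp add: measurable_action_def)
  ultimately show ?thesis
    using haar T_add by unfold_locales (auto simp: measurable_action_def space_pair_measure)
qed

lemma invariant_prob_pair:
  assumes R\<^sub>1: "invariant_prob M T R\<^sub>1" and R\<^sub>2: "invariant_prob M T R\<^sub>2"
  shows "invariant_prob (M \<Otimes>\<^sub>M M) (\<lambda>\<sigma>. map_prod (T \<sigma>) (T \<sigma>)) (R\<^sub>1 \<Otimes>\<^sub>M R\<^sub>2)"
  unfolding invariant_prob_def
proof (intro conjI allI)
  show "prob_space (R\<^sub>1 \<Otimes>\<^sub>M R\<^sub>2)"
    using assms by (intro prob_space_pair) (simp_all add: invariant_prob_def)
  show "sets (R\<^sub>1 \<Otimes>\<^sub>M R\<^sub>2) = sets (M \<Otimes>\<^sub>M M)"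
    using assms by (intro sets_pair_measure_cong) (simp_all add: invariant_prob_def)
  fix \<sigma>
  have "distr R\<^sub>1 M (T \<sigma>) \<Otimes>\<^sub>M distr R\<^sub>2 M (T \<sigma>)
      = distr (R\<^sub>1 \<Otimes>\<^sub>M R\<^sub>2) (M \<Otimes>\<^sub>M M) (\<lambda>(x, y). (T \<sigma> x, T \<sigma> y))"
    using R\<^sub>2 invariant_prob_measurable_T[OF R\<^sub>1] invariant_prob_measurable_T[OF R\<^sub>2]
    by (intro pair_measure_distr) (simp_all add: invariant_prob_def prob_space_imp_sigma_finite)
  then show "distr (R\<^sub>1 \<Otimes>\<^sub>M R\<^sub>2) (M \<Otimes>\<^sub>M M) (map_prod (T \<sigma>) (T \<sigma>)) = R\<^sub>1 \<Otimes>\<^sub>M R\<^sub>2"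
    using R\<^sub>1 R\<^sub>2 by (simp add: invariant_prob_def map_prod_def split_beta')
qed

text \<open>Jensen's inequality for \<open>exp\<close> along the orbit of \<open>(x, y)\<close>, on which the invariant cost
  \<open>c\<close> is constant.\<close>
lemma gibbs_density_Ssym_le:
  assumes \<gamma>\<^sub>1: "\<gamma>\<^sub>1 \<in> Mb M" and \<gamma>\<^sub>2: "\<gamma>\<^sub>2 \<in> Mb M"
    and c: "case_prod c \<in> borel_measurable (M \<Otimes>\<^sub>M M)" "\<forall>x\<in>space M. \<forall>y\<in>space M. c x y \<ge> 0"
    and c_inv: "\<forall>\<sigma>. \<forall>x\<in>space M. \<forall>y\<in>space M. c (T \<sigma> x) (T \<sigma> y) = c x y"
    and "\<epsilon> > 0" and x: "x \<in> space M" and y: "y \<in> space M"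
  shows "gibbs_density c \<epsilon> (Ssym \<mu> T \<gamma>\<^sub>1) (Ssym \<mu> T \<gamma>\<^sub>2) (x, y)
      \<le> Ssym \<mu> (\<lambda>\<sigma>. map_prod (T \<sigma>) (T \<sigma>)) (gibbs_density c \<epsilon> \<gamma>\<^sub>1 \<gamma>\<^sub>2) (x, y)"
proof -
  interpret diag: haar_action "M \<Otimes>\<^sub>M M" \<mu> "\<lambda>\<sigma>. map_prod (T \<sigma>) (T \<sigma>)"
    by (rule haar_action_diagonal)
  define X where "X = (\<lambda>\<sigma>. (\<gamma>\<^sub>1 (T \<sigma> x) + \<gamma>\<^sub>2 (T \<sigma> y) - c x y) / \<epsilon>)"
  have orbit: "gibbs_density c \<epsilon> \<gamma>\<^sub>1 \<gamma>\<^sub>2 (T \<sigma> x, T \<sigma> y) = exp (X \<sigma>)" for \<sigma>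
    using c_inv x y by (simp add: gibbs_density_def X_def)
  have orbit_integrable: "integrable \<mu> (\<lambda>\<sigma>. \<gamma>\<^sub>1 (T \<sigma> x))" "integrable \<mu> (\<lambda>\<sigma>. \<gamma>\<^sub>2 (T \<sigma> y))"
    using orbit_Mb[OF \<gamma>\<^sub>1 x] orbit_Mb[OF \<gamma>\<^sub>2 y] by (simp_all add: mu.integrable_Mb)
  then have "integrable \<mu> X"
    by (simp add: X_def)
  moreover have "integrable \<mu> (\<lambda>\<sigma>. exp (X \<sigma>))"
    using diag.orbit_Mb[OF gibbs_density_Mb[OF \<gamma>\<^sub>1 \<gamma>\<^sub>2 c \<open>\<epsilon> > 0\<close>], of "(x, y)"] x y
    by (simp add: orbit mu.integrable_Mb space_pair_measure)
  ultimately have "exp (\<integral>\<sigma>. X \<sigma> \<partial>\<mu>) \<le> (\<integral>\<sigma>. exp (X \<sigma>) \<partial>\<mu>)"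
    by (intro mu.jensens_inequality[where I = UNIV]) (auto simp: exp_convex)
  moreover have "(\<integral>\<sigma>. X \<sigma> \<partial>\<mu>) = (Ssym \<mu> T \<gamma>\<^sub>1 x + Ssym \<mu> T \<gamma>\<^sub>2 y - c x y) / \<epsilon>"
    using orbit_integrable by (simp add: X_def Ssym_def mu.prob_space)
  ultimately have "gibbs_density c \<epsilon> (Ssym \<mu> T \<gamma>\<^sub>1) (Ssym \<mu> T \<gamma>\<^sub>2) (x, y) \<le> (\<integral>\<sigma>. exp (X \<sigma>) \<partial>\<mu>)"
    by (simp add: gibbs_density_def)
  also have "\<dots> = Ssym \<mu> (\<lambda>\<sigma>. map_prod (T \<sigma>) (T \<sigma>)) (gibbs_density c \<epsilon> \<gamma>\<^sub>1 \<gamma>\<^sub>2) (x, y)"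
    by (simp add: Ssym_def orbit)
  finally show ?thesis .
qed

lemma integral_gibbs_density_Ssym_le:
  assumes P: "invariant_prob M T P" and Q: "invariant_prob M T Q"
    and \<gamma>\<^sub>1: "\<gamma>\<^sub>1 \<in> Mb M" and \<gamma>\<^sub>2: "\<gamma>\<^sub>2 \<in> Mb M"
    and c: "case_prod c \<in> borel_measurable (M \<Otimes>\<^sub>M M)" "\<forall>x\<in>space M. \<forall>y\<in>space M. c x y \<ge> 0"
    and c_inv: "\<forall>\<sigma>. \<forall>x\<in>space M. \<forall>y\<in>space M. c (T \<sigma> x) (T \<sigma> y) = c x y"
    and "\<epsilon> > 0"
  shows "(\<integral>z. gibbs_density c \<epsilon> (Ssym \<mu> T \<gamma>\<^sub>1) (Ssym \<mu> T \<gamma>\<^sub>2) z \<partial>(P \<Otimes>\<^sub>M Q))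
      \<le> (\<integral>z. gibbs_density c \<epsilon> \<gamma>\<^sub>1 \<gamma>\<^sub>2 z \<partial>(P \<Otimes>\<^sub>M Q))"
proof -
  interpret diag: haar_action "M \<Otimes>\<^sub>M M" \<mu> "\<lambda>\<sigma>. map_prod (T \<sigma>) (T \<sigma>)"
    by (rule haar_action_diagonal)
  have PQ: "invariant_prob (M \<Otimes>\<^sub>M M) (\<lambda>\<sigma>. map_prod (T \<sigma>) (T \<sigma>)) (P \<Otimes>\<^sub>M Q)"
    using P Q by (rule invariant_prob_pair)
  then interpret PQ: prob_space "P \<Otimes>\<^sub>M Q"
    by (simp add: invariant_prob_def)
  have PQ_sets: "sets (P \<Otimes>\<^sub>M Q) = sets (M \<Otimes>\<^sub>M M)"
    using PQ by (simp add: invariant_prob_def)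
  have G: "gibbs_density c \<epsilon> \<gamma>\<^sub>1 \<gamma>\<^sub>2 \<in> Mb (M \<Otimes>\<^sub>M M)"
    using \<gamma>\<^sub>1 \<gamma>\<^sub>2 c \<open>\<epsilon> > 0\<close> by (rule gibbs_density_Mb)
  have "(\<integral>z. gibbs_density c \<epsilon> (Ssym \<mu> T \<gamma>\<^sub>1) (Ssym \<mu> T \<gamma>\<^sub>2) z \<partial>(P \<Otimes>\<^sub>M Q))
      \<le> (\<integral>z. Ssym \<mu> (\<lambda>\<sigma>. map_prod (T \<sigma>) (T \<sigma>)) (gibbs_density c \<epsilon> \<gamma>\<^sub>1 \<gamma>\<^sub>2) z \<partial>(P \<Otimes>\<^sub>M Q))"
  proof (intro integral_mono PQ.integrable_Mb[OF PQ_sets])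
    show "gibbs_density c \<epsilon> (Ssym \<mu> T \<gamma>\<^sub>1) (Ssym \<mu> T \<gamma>\<^sub>2) \<in> Mb (M \<Otimes>\<^sub>M M)"
      using Ssym_Mb[OF \<gamma>\<^sub>1] Ssym_Mb[OF \<gamma>\<^sub>2] c \<open>\<epsilon> > 0\<close> by (rule gibbs_density_Mb)
    show "Ssym \<mu> (\<lambda>\<sigma>. map_prod (T \<sigma>) (T \<sigma>)) (gibbs_density c \<epsilon> \<gamma>\<^sub>1 \<gamma>\<^sub>2) \<in> Mb (M \<Otimes>\<^sub>M M)"
      using G by (rule diag.Ssym_Mb)
    fix z assume "z \<in> space (P \<Otimes>\<^sub>M Q)"
    then have "z \<in> space (M \<Otimes>\<^sub>M M)"
      using sets_eq_imp_space_eq[OF PQ_sets] by simp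
    then have "fst z \<in> space M" "snd z \<in> space M"
      by (auto simp: space_pair_measure)
    then show "gibbs_density c \<epsilon> (Ssym \<mu> T \<gamma>\<^sub>1) (Ssym \<mu> T \<gamma>\<^sub>2) z
        \<le> Ssym \<mu> (\<lambda>\<sigma>. map_prod (T \<sigma>) (T \<sigma>)) (gibbs_density c \<epsilon> \<gamma>\<^sub>1 \<gamma>\<^sub>2) z"
      using gibbs_density_Ssym_le[OF \<gamma>\<^sub>1 \<gamma>\<^sub>2 c c_inv \<open>\<epsilon> > 0\<close>, of "fst z" "snd z"] by simp
  qed
  also have "\<dots> = (\<integral>z. gibbs_density c \<epsilon> \<gamma>\<^sub>1 \<gamma>\<^sub>2 z \<partial>(P \<Otimes>\<^sub>M Q))"
    using PQ G by (rule diag.integral_Ssym)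
  finally show ?thesis .
qed

lemma Ssym_pair_in_Inv2:
  assumes "\<Gamma> \<subseteq> Mb M \<times> Mb M" and "(\<lambda>g. (Ssym \<mu> T (fst g), Ssym \<mu> T (snd g))) ` \<Gamma> \<subseteq> \<Gamma>"
    and "g \<in> \<Gamma>"
  shows "(Ssym \<mu> T (fst g), Ssym \<mu> T (snd g)) \<in> Inv2 M T \<Gamma>"
proof -
  have "fst g \<in> borel_measurable M" "snd g \<in> borel_measurable M"
    using assms(1,3) by (auto simp: Mb_def)
  moreover have "(Ssym \<mu> T (fst g), Ssym \<mu> T (snd g)) \<in> \<Gamma>"
    using assms(2,3) by blast
  ultimately show ?thesis
    by (simp add: Inv2_def Ssym_invariant)
qed

lemma W_ce_Inv2:
  assumes P: "invariant_prob M T P" and Q: "invariant_prob M T Q"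
    and \<Gamma>: "\<Gamma> \<subseteq> Mb M \<times> Mb M" "(\<lambda>g. (Ssym \<mu> T (fst g), Ssym \<mu> T (snd g))) ` \<Gamma> \<subseteq> \<Gamma>"
    and c: "case_prod c \<in> borel_measurable (M \<Otimes>\<^sub>M M)" "\<forall>x\<in>space M. \<forall>y\<in>space M. c x y \<ge> 0"
    and c_inv: "\<forall>\<sigma>. \<forall>x\<in>space M. \<forall>y\<in>space M. c (T \<sigma> x) (T \<sigma> y) = c x y"
    and "\<epsilon> > 0"
  shows "W_ce c \<epsilon> \<Gamma> Q P = W_ce c \<epsilon> (Inv2 M T \<Gamma>) Q P"
  unfolding W_ce_def gibbs_density_def[symmetric]
proof (rule SUP_eq_SUP_subset_improving)
  show "Inv2 M T \<Gamma> \<subseteq> \<Gamma>"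
    unfolding Inv2_def by blast
  show "(Ssym \<mu> T (fst g), Ssym \<mu> T (snd g)) \<in> Inv2 M T \<Gamma>" if "g \<in> \<Gamma>" for g
    using \<Gamma> that by (rule Ssym_pair_in_Inv2)
  fix g assume "g \<in> \<Gamma>"
  then have g: "fst g \<in> Mb M" "snd g \<in> Mb M"
    using \<Gamma> by auto
  have "\<epsilon> * (\<integral>z. gibbs_density c \<epsilon> (Ssym \<mu> T (fst g)) (Ssym \<mu> T (snd g)) z \<partial>(P \<Otimes>\<^sub>M Q))
      \<le> \<epsilon> * (\<integral>z. gibbs_density c \<epsilon> (fst g) (snd g) z \<partial>(P \<Otimes>\<^sub>M Q))"
    using integral_gibbs_density_Ssym_le[OF P Q g c c_inv \<open>\<epsilon> > 0\<close>] \<open>\<epsilon> > 0\<close> by simp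
  then show "ereal ((\<integral>x. fst g x \<partial>P) + (\<integral>y. snd g y \<partial>Q)
        - \<epsilon> * (\<integral>z. gibbs_density c \<epsilon> (fst g) (snd g) z \<partial>(P \<Otimes>\<^sub>M Q)) + \<epsilon>)
      \<le> ereal ((\<integral>x. fst (Ssym \<mu> T (fst g), Ssym \<mu> T (snd g)) x \<partial>P)
        + (\<integral>y. snd (Ssym \<mu> T (fst g), Ssym \<mu> T (snd g)) y \<partial>Q)
        - \<epsilon> * (\<integral>z. gibbs_density c \<epsilon> (fst (Ssym \<mu> T (fst g), Ssym \<mu> T (snd g)))
            (snd (Ssym \<mu> T (fst g), Ssym \<mu> T (snd g))) z \<partial>(P \<Otimes>\<^sub>M Q)) + \<epsilon>)"
    using P Q g by (simp add: integral_Ssym)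
qed

end

theorem theorem1:
  fixes M :: "'a measure" and \<mu> :: "'s::{topological_group_add, t2_space} measure"
    and T :: "'s \<Rightarrow> 'a \<Rightarrow> 'a" and P Q :: "'a measure"
  assumes cpt: "compact (UNIV :: 's set)"
    and haar: "haar_prob \<mu>"
    and act: "measurable_action \<mu> M T"
    and P: "prob_space P" "sets P = sets M"
    and Q: "prob_space Q" "sets Q = sets M"
    and Pinv: "\<forall>\<sigma>. distr P M (T \<sigma>) = P"
    and Qinv: "\<forall>\<sigma>. distr Q M (T \<sigma>) = Q"
  shows
    "(\<forall>f (\<Gamma> :: ('a \<Rightarrow> real) set). admissible_f f \<longrightarrow> \<Gamma> \<subseteq> Mb M \<longrightarrow> Ssym \<mu> T ` \<Gamma> \<subseteq> \<Gamma> \<longrightarrow>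
        fGamma_div f \<Gamma> Q P = fGamma_div f (Inv M T \<Gamma>) Q P \<and>
        IPM \<Gamma> Q P = IPM (Inv M T \<Gamma>) Q P)
     \<and>
     (\<forall>(\<Gamma> :: (('a \<Rightarrow> real) \<times> ('a \<Rightarrow> real)) set) c \<epsilon>.
        \<Gamma> \<subseteq> Mb M \<times> Mb M \<longrightarrow> (\<lambda>g. (Ssym \<mu> T (fst g), Ssym \<mu> T (snd g))) ` \<Gamma> \<subseteq> \<Gamma> \<longrightarrow>
        case_prod c \<in> borel_measurable (M \<Otimes>\<^sub>M M) \<longrightarrow> (\<forall>x\<in>space M. \<forall>y\<in>space M. c x y \<ge> 0) \<longrightarrow>
        \<epsilon> > 0 \<longrightarrow>
        (\<forall>\<sigma>. \<forall>x\<in>space M. \<forall>y\<in>space M. c (T \<sigma> x) (T \<sigma> y) = c x y) \<longrightarrow>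
        sinkhorn c \<epsilon> \<Gamma> Q P = sinkhorn c \<epsilon> (Inv2 M T \<Gamma>) Q P)"
proof -
  interpret haar_action M \<mu> T
    using haar act by (rule haar_action.intro)
  have P_inv: "invariant_prob M T P" and Q_inv: "invariant_prob M T Q"
    using P Pinv Q Qinv by (simp_all add: invariant_prob_def)
  show ?thesis
  proof (intro conjI allI impI)
    fix f and \<Gamma> :: "('a \<Rightarrow> real) set"
    assume "\<Gamma> \<subseteq> Mb M" and "Ssym \<mu> T ` \<Gamma> \<subseteq> \<Gamma>"
    then show "fGamma_div f \<Gamma> Q P = fGamma_div f (Inv M T \<Gamma>) Q P"
      and "IPM \<Gamma> Q P = IPM (Inv M T \<Gamma>) Q P"
      using P_inv Q_inv by (simp_all add: fGamma_div_Inv IPM_Inv)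
  next
    fix \<Gamma> :: "(('a \<Rightarrow> real) \<times> ('a \<Rightarrow> real)) set" and c :: "'a \<Rightarrow> 'a \<Rightarrow> real" and \<epsilon> :: real
    assume "\<Gamma> \<subseteq> Mb M \<times> Mb M" and "(\<lambda>g. (Ssym \<mu> T (fst g), Ssym \<mu> T (snd g))) ` \<Gamma> \<subseteq> \<Gamma>"
      and "case_prod c \<in> borel_measurable (M \<Otimes>\<^sub>M M)" and "\<forall>x\<in>space M. \<forall>y\<in>space M. c x y \<ge> 0"
      and "\<epsilon> > 0" and "\<forall>\<sigma>. \<forall>x\<in>space M. \<forall>y\<in>space M. c (T \<sigma> x) (T \<sigma> y) = c x y"
    then show "sinkhorn c \<epsilon> \<Gamma> Q P = sinkhorn c \<epsilon> (Inv2 M T \<Gamma>) Q P"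
      unfolding sinkhorn_def using P_inv Q_inv by (simp add: W_ce_Inv2)
  qed
qed

end
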